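(* Let $W:\mathbb{R}\to\mathbb{R}$ be an AWGN channel with noise variance $\sigma_W^2>0$, i.e. for input $x$ the output is distributed as $\mathcal{N}(x,\sigma_W^2)$. Let $P>0$ and, for each $n$, let $e_{0,n}:\{0,1\}^{l_n}\to\mathbb{R}^n$ be an encoder satisfying $\frac1n\|e_{0,n}(v)\|_2^2\le P$ for all $v\in\{0,1\}^{l_n}$. Let $W_{e_{0,n}}:\{0,1\}^{l_n}\to\mathbb{R}^n$ be the channel whose output given input $v$ is $e_{0,n}(v)+N$ with $N\sim\mathcal{N}(0,\sigma_W^2 I_n)$. Then for every $0<\delta<1/2$, with $\epsilon_n=e^{-n\delta^2/8}$, \[ I_{\max}^{\epsilon_n}(W_{e_{0,n}})\le \frac n2\log\Big(1+\delta+\frac{P}{\sigma_W^2}\Big)+\frac{n\delta\log e}{2}+o(n)\quad\text{as } n\to\infty, \] with logarithms to base 2.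
   Context: For a (possibly subnormalized) channel $V$ from a finite set $\mathcal{V}$ to $\mathbb{R}^n$ with densities $\omega(z\mid v)$ w.r.t. Lebesgue measure, its max-information is $I_{\max}(V)=\log_2\int_{\mathbb{R}^n}\max_{v\in\mathcal{V}}\omega(z\mid v)\,dz$. For measurable $\mathcal{T}\subseteq\mathcal{V}\times\mathbb{R}^n$, $V_{\mathcal{T}}$ is the subnormalized channel with density $\omega_{\mathcal{T}}(z\mid v)=\omega(z\mid v)$ if $(v,z)\in\mathcal{T}$ and $0$ otherwise. The $\epsilon$-smooth max-information $I_{\max}^{\epsilon}(V)$ is the infimum of $I_{\max}(V_{\mathcal{T}})$ over all such $\mathcal{T}$ with $V(\{z:(v,z)\in\mathcal{T}\}\mid v)\ge 1-\epsilon$ for every $v\in\mathcal{V}$. *)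

theory Defs
  imports "HOL-Probability.Probability" "HOL-Library.Landau_Symbols"
begin

definition log2_ennreal :: "ennreal \<Rightarrow> ereal" where
  "log2_ennreal x = (if x = \<infinity> then \<infinity> else if x = 0 then - \<infinity>
                     else ereal (log 2 (enn2real x)))"

definition restr_dens :: "('v \<times> 'z) set \<Rightarrow> ('v \<Rightarrow> 'z \<Rightarrow> real) \<Rightarrow> 'v \<Rightarrow> 'z \<Rightarrow> real" where
  "restr_dens T \<omega> v z = (if (v, z) \<in> T then \<omega> v z else 0)"

definition Imax :: "'z measure \<Rightarrow> 'v set \<Rightarrow> ('v \<Rightarrow> 'z \<Rightarrow> real) \<Rightarrow> ereal" where
  "Imax M V \<omega> = log2_ennreal (\<integral>\<^sup>+ z. ennreal (Max ((\<lambda>v. \<omega> v z) ` V)) \<partial>M)"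

definition smooth_Imax :: "'z measure \<Rightarrow> 'v set \<Rightarrow> ('v \<Rightarrow> 'z \<Rightarrow> real) \<Rightarrow> real \<Rightarrow> ereal" where
  "smooth_Imax M V \<omega> \<epsilon> =
     (INF T \<in> {T. T \<in> sets (count_space V \<Otimes>\<^sub>M M) \<and>
                 (\<forall>v\<in>V. (\<integral>\<^sup>+ z. indicator {z. (v, z) \<in> T} z * ennreal (\<omega> v z) \<partial>M)
                          \<ge> ennreal (1 - \<epsilon>))}.
        Imax M V (restr_dens T \<omega>))"

definition lborel_n :: "nat \<Rightarrow> (nat \<Rightarrow> real) measure" where
  "lborel_n n = PiM {..<n} (\<lambda>_. lborel)"

text \<open>Density of the channel W_e: output e(v) + N, N ~ N(0, s I_n), s the noise variance.\<close>
definition awgn_dens :: "real \<Rightarrow> nat \<Rightarrow> ('v \<Rightarrow> nat \<Rightarrow> real) \<Rightarrow> 'v \<Rightarrow> (nat \<Rightarrow> real) \<Rightarrow> real" where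
  "awgn_dens s n e v z = (\<Prod>i<n. normal_density (e v i) (sqrt s) (z i))"

end

theory Submission
  imports Defs
begin

text \<open>Keep, for each input v, only the outputs where the density w_v is at most c * q, with q the
  product Gaussian density of variance s = sigma (1 + delta) + P per coordinate. The restricted
  channel is dominated by c * q, so its max-information is at most log c. A Chernoff bound with
  tilt theta = delta/2 bounds the discarded mass by c^(-theta) * integral w_v^(1+theta) q^(-theta);
  this is a Gaussian integral which, under the power constraint and for
  ln c = n (ln (s / sigma) + delta) / 2, is at most exp (- n delta^2 / 8).\<close>

lemma log2_ennreal_le_log:
  assumes "X \<le> ennreal c" "c > 0"
  shows "log2_ennreal X \<le> ereal (log 2 c)"
proof (cases X rule: ennreal_cases)
  case (real x)
  with assms show ?thesis
    by (cases "x = 0") (auto simp: log2_ennreal_def)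
next
  case top
  with assms show ?thesis by (simp add: top_unique)
qed

lemma Imax_le_log_if_dominated:
  assumes "finite V" "V \<noteq> {}" "c > 0"
    and q: "q \<in> borel_measurable M" "(\<integral>\<^sup>+z. ennreal (q z) \<partial>M) \<le> 1"
    and dom: "\<And>v z. v \<in> V \<Longrightarrow> z \<in> space M \<Longrightarrow> \<omega> v z \<le> c * q z"
  shows "Imax M V \<omega> \<le> ereal (log 2 c)"
proof -
  have "(\<integral>\<^sup>+z. ennreal (Max ((\<lambda>v. \<omega> v z) ` V)) \<partial>M) \<le> (\<integral>\<^sup>+z. ennreal c * ennreal (q z) \<partial>M)"
  proof (rule nn_integral_mono)
    fix z assume "z \<in> space M"
    then have "Max ((\<lambda>v. \<omega> v z) ` V) \<le> c * q z"
      using assms(1,2) dom by (subst Max_le_iff) auto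
    then show "ennreal (Max ((\<lambda>v. \<omega> v z) ` V)) \<le> ennreal c * ennreal (q z)"
      using \<open>c > 0\<close> by (simp add: ennreal_leI flip: ennreal_mult')
  qed
  also have "\<dots> = ennreal c * (\<integral>\<^sup>+z. ennreal (q z) \<partial>M)"
    using q(1) by (simp add: nn_integral_cmult)
  also have "\<dots> \<le> ennreal c"
    using mult_left_mono[OF q(2)] by simp
  finally show ?thesis
    unfolding Imax_def using \<open>c > 0\<close> by (rule log2_ennreal_le_log)
qed

lemma smooth_Imax_le_log_threshold:
  fixes M :: "'z measure" and \<omega> :: "'v \<Rightarrow> 'z \<Rightarrow> real"
  assumes "finite V" "V \<noteq> {}" "c > 0"
    and [measurable]: "\<And>v. v \<in> V \<Longrightarrow> \<omega> v \<in> borel_measurable M" "q \<in> borel_measurable M"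
    and "\<And>z. q z \<ge> 0" "(\<integral>\<^sup>+z. ennreal (q z) \<partial>M) \<le> 1"
    and mass: "\<And>v. v \<in> V \<Longrightarrow>
      ennreal (1 - \<epsilon>) \<le> (\<integral>\<^sup>+z. indicator {z \<in> space M. \<omega> v z \<le> c * q z} z * ennreal (\<omega> v z) \<partial>M)"
  shows "smooth_Imax M V \<omega> \<epsilon> \<le> ereal (log 2 c)"
proof -
  define T where "T = {p \<in> space (count_space V \<Otimes>\<^sub>M M). \<omega> (fst p) (snd p) \<le> c * q (snd p)}"
  have [measurable]: "(\<lambda>p. \<omega> (fst p) (snd p)) \<in> borel_measurable (count_space V \<Otimes>\<^sub>M M)"
    by (rule measurable_pair_measure_countable1) (use \<open>finite V\<close> in \<open>auto simp: countable_finite\<close>)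
  have "T \<in> sets (count_space V \<Otimes>\<^sub>M M)"
    unfolding T_def by measurable
  moreover have T_section: "{z. (v, z) \<in> T} = {z \<in> space M. \<omega> v z \<le> c * q z}" if "v \<in> V" for v
    using that by (auto simp: T_def space_pair_measure)
  ultimately have "smooth_Imax M V \<omega> \<epsilon> \<le> Imax M V (restr_dens T \<omega>)"
    unfolding smooth_Imax_def using mass by (intro INF_lower) auto
  also have "\<dots> \<le> ereal (log 2 c)"
    using assms(1-3,5-7) T_section by (intro Imax_le_log_if_dominated) (auto simp: restr_dens_def)
  finally show ?thesis .
qed

lemma ennreal_one_minus_le:
  fixes a :: ennreal
  assumes "1 \<le> a + ennreal \<epsilon>" "0 \<le> \<epsilon>"
  shows "ennreal (1 - \<epsilon>) \<le> a"
proof (cases "\<epsilon> \<le> 1")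
  case True
  then have "ennreal \<epsilon> + ennreal (1 - \<epsilon>) \<le> ennreal \<epsilon> + a"
    using assms by (simp add: add.commute flip: ennreal_plus)
  then show ?thesis by (simp add: ennreal_add_left_cancel_le)
qed (simp add: ennreal_neg)

lemma nn_integral_below_threshold_ge:
  fixes \<omega> q :: "'z \<Rightarrow> real"
  assumes [measurable]: "\<omega> \<in> borel_measurable M" "q \<in> borel_measurable M"
    and \<omega>_nonneg: "\<And>z. \<omega> z \<ge> 0" and q_pos: "\<And>z. q z > 0" and "c > 0" "\<theta> \<ge> 0"
    and "(\<integral>\<^sup>+z. ennreal (\<omega> z) \<partial>M) = 1" "0 \<le> \<epsilon>"
    and tail: "ennreal (c powr - \<theta>) * (\<integral>\<^sup>+z. ennreal (\<omega> z * (\<omega> z / q z) powr \<theta>) \<partial>M) \<le> ennreal \<epsilon>"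
  shows "ennreal (1 - \<epsilon>) \<le> (\<integral>\<^sup>+z. indicator {z \<in> space M. \<omega> z \<le> c * q z} z * ennreal (\<omega> z) \<partial>M)"
proof (rule ennreal_one_minus_le[OF _ \<open>0 \<le> \<epsilon>\<close>])
  have pointwise: "ennreal (\<omega> z) \<le> indicator {z \<in> space M. \<omega> z \<le> c * q z} z * ennreal (\<omega> z)
      + ennreal (c powr - \<theta>) * ennreal (\<omega> z * (\<omega> z / q z) powr \<theta>)" if "z \<in> space M" for z
  proof (cases "\<omega> z \<le> c * q z")
    case False
    then have "c \<le> \<omega> z / q z"
      using q_pos[of z] by (simp add: field_simps)
    then have "c powr \<theta> \<le> (\<omega> z / q z) powr \<theta>"
      using \<open>c > 0\<close> \<open>\<theta> \<ge> 0\<close> by (intro powr_mono2) auto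
    then have "1 \<le> c powr - \<theta> * (\<omega> z / q z) powr \<theta>"
      using \<open>c > 0\<close> by (simp add: powr_minus field_simps)
    from mult_left_mono[OF this \<omega>_nonneg[of z]]
    have "\<omega> z \<le> c powr - \<theta> * (\<omega> z * (\<omega> z / q z) powr \<theta>)"
      by (simp add: algebra_simps)
    then show ?thesis
      using False \<omega>_nonneg[of z] by (simp add: ennreal_leI flip: ennreal_mult)
  qed (use that in simp)
  have "1 = (\<integral>\<^sup>+z. ennreal (\<omega> z) \<partial>M)"
    using assms(7) by simp
  also have "\<dots> \<le> (\<integral>\<^sup>+z. indicator {z \<in> space M. \<omega> z \<le> c * q z} z * ennreal (\<omega> z)
      + ennreal (c powr - \<theta>) * ennreal (\<omega> z * (\<omega> z / q z) powr \<theta>) \<partial>M)"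
    by (intro nn_integral_mono pointwise)
  also have "\<dots> = (\<integral>\<^sup>+z. indicator {z \<in> space M. \<omega> z \<le> c * q z} z * ennreal (\<omega> z) \<partial>M)
      + ennreal (c powr - \<theta>) * (\<integral>\<^sup>+z. ennreal (\<omega> z * (\<omega> z / q z) powr \<theta>) \<partial>M)"
    by (simp add: nn_integral_add nn_integral_cmult)
  also have "\<dots> \<le> (\<integral>\<^sup>+z. indicator {z \<in> space M. \<omega> z \<le> c * q z} z * ennreal (\<omega> z) \<partial>M) + ennreal \<epsilon>"
    using tail by (rule add_left_mono)
  finally show "1 \<le> \<dots>" .
qed

lemma normal_density_sqrt:
  "\<sigma> > 0 \<Longrightarrow> normal_density \<mu> (sqrt \<sigma>) z = exp (- ((z - \<mu>)\<^sup>2 / (2 * \<sigma>))) / sqrt (2 * pi * \<sigma>)"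
  by (simp add: normal_density_def)

lemma nn_integral_normal_density: "\<sigma> > 0 \<Longrightarrow> (\<integral>\<^sup>+z. ennreal (normal_density \<mu> \<sigma> z) \<partial>lborel) = 1"
  by (simp add: nn_integral_eq_integral[OF integrable_normal_density])

lemma normal_density_tilted:
  fixes \<sigma> s \<theta> x z D :: real
  assumes "\<sigma> > 0" "\<sigma> \<le> s" "\<theta> \<ge> 0" and D: "D = (1 + \<theta>) * s - \<theta> * \<sigma>"
  shows "normal_density x (sqrt \<sigma>) z * (normal_density x (sqrt \<sigma>) z / normal_density 0 (sqrt s) z) powr \<theta>
    = (s / \<sigma>) powr (\<theta> / 2) * sqrt (s / D) * exp (\<theta> * (1 + \<theta>) * x\<^sup>2 / (2 * D))
      * normal_density ((1 + \<theta>) * x * s / D) (sqrt (\<sigma> * s / D)) z"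
proof -
  have "s > 0" "D > 0"
    using assms mult_left_mono[of \<sigma> s \<theta>] by (auto simp: algebra_simps)
  define Q where "Q = - ((z - x)\<^sup>2 / (2 * \<sigma>)) + z\<^sup>2 / (2 * s)"
  have "exp Q = exp (- ((z - x)\<^sup>2 / (2 * \<sigma>))) / exp (- (z\<^sup>2 / (2 * s)))"
    unfolding Q_def by (simp flip: exp_diff)
  then have ratio: "normal_density x (sqrt \<sigma>) z / normal_density 0 (sqrt s) z = sqrt (s / \<sigma>) * exp Q"
    using assms \<open>s > 0\<close> by (simp add: normal_density_sqrt real_sqrt_divide real_sqrt_mult field_simps)
  have powr_ratio: "(sqrt (s / \<sigma>) * exp Q) powr \<theta> = (s / \<sigma>) powr (\<theta> / 2) * exp (\<theta> * Q)"
    using assms \<open>s > 0\<close> by (simp add: powr_mult powr_half_sqrt[symmetric] powr_powr exp_powr_real)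
  have square: "- ((z - x)\<^sup>2 / (2 * \<sigma>)) + \<theta> * Q
      = \<theta> * (1 + \<theta>) * x\<^sup>2 / (2 * D) + - ((z - (1 + \<theta>) * x * s / D)\<^sup>2 / (2 * (\<sigma> * s / D)))"
    using assms(1) \<open>s > 0\<close> \<open>D > 0\<close> unfolding Q_def
    by (simp add: field_simps power2_eq_square) (simp add: D algebra_simps)
  have normalization: "sqrt (s / D) / sqrt (2 * pi * (\<sigma> * s / D)) = 1 / sqrt (2 * pi * \<sigma>)"
    using assms \<open>s > 0\<close> \<open>D > 0\<close> by (simp add: real_sqrt_divide real_sqrt_mult field_simps)
  have "normal_density x (sqrt \<sigma>) z * (normal_density x (sqrt \<sigma>) z / normal_density 0 (sqrt s) z) powr \<theta>
      = (s / \<sigma>) powr (\<theta> / 2) * (1 / sqrt (2 * pi * \<sigma>)) * exp (- ((z - x)\<^sup>2 / (2 * \<sigma>)) + \<theta> * Q)"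
    unfolding ratio powr_ratio exp_add using assms(1) by (simp add: normal_density_sqrt)
  also have "\<dots> = (s / \<sigma>) powr (\<theta> / 2) * (sqrt (s / D) / sqrt (2 * pi * (\<sigma> * s / D)))
      * exp (\<theta> * (1 + \<theta>) * x\<^sup>2 / (2 * D) + - ((z - (1 + \<theta>) * x * s / D)\<^sup>2 / (2 * (\<sigma> * s / D))))"
    unfolding square normalization ..
  also have "\<dots> = (s / \<sigma>) powr (\<theta> / 2) * sqrt (s / D) * exp (\<theta> * (1 + \<theta>) * x\<^sup>2 / (2 * D))
      * normal_density ((1 + \<theta>) * x * s / D) (sqrt (\<sigma> * s / D)) z"
    unfolding exp_add using assms(1) \<open>s > 0\<close> \<open>D > 0\<close> by (simp add: normal_density_sqrt)
  finally show ?thesis .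
qed

lemma nn_integral_normal_density_tilted:
  fixes \<sigma> s \<theta> x D :: real
  assumes "\<sigma> > 0" "\<sigma> \<le> s" "\<theta> \<ge> 0" and D: "D = (1 + \<theta>) * s - \<theta> * \<sigma>"
  shows "(\<integral>\<^sup>+z. ennreal (normal_density x (sqrt \<sigma>) z
            * (normal_density x (sqrt \<sigma>) z / normal_density 0 (sqrt s) z) powr \<theta>) \<partial>lborel)
    = ennreal (exp ((\<theta> * ln (s / \<sigma>) + ln (s / D)) / 2 + \<theta> * (1 + \<theta>) * x\<^sup>2 / (2 * D)))"
proof -
  have "s > 0" "D > 0"
    using assms mult_left_mono[of \<sigma> s \<theta>] by (auto simp: algebra_simps)
  define C where "C = (s / \<sigma>) powr (\<theta> / 2) * sqrt (s / D) * exp (\<theta> * (1 + \<theta>) * x\<^sup>2 / (2 * D))"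
  have C: "C = exp ((\<theta> * ln (s / \<sigma>) + ln (s / D)) / 2 + \<theta> * (1 + \<theta>) * x\<^sup>2 / (2 * D))"
    using assms(1) \<open>s > 0\<close> \<open>D > 0\<close> unfolding C_def
    by (simp add: powr_half_sqrt[symmetric] powr_def exp_add add_divide_distrib)
  moreover have "(\<integral>\<^sup>+z. ennreal (normal_density x (sqrt \<sigma>) z
            * (normal_density x (sqrt \<sigma>) z / normal_density 0 (sqrt s) z) powr \<theta>) \<partial>lborel)
      = (\<integral>\<^sup>+z. ennreal C * ennreal (normal_density ((1 + \<theta>) * x * s / D) (sqrt (\<sigma> * s / D)) z) \<partial>lborel)"
    unfolding normal_density_tilted[OF assms] C_def[symmetric] using C by (intro nn_integral_cong ennreal_mult) auto
  moreover have "\<dots> = ennreal C"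
    using assms(1) \<open>s > 0\<close> \<open>D > 0\<close> by (simp add: nn_integral_cmult nn_integral_normal_density)
  ultimately show ?thesis by simp
qed

lemma nn_integral_lborel_n_prod:
  fixes g :: "nat \<Rightarrow> real \<Rightarrow> real"
  assumes "\<And>i. i < n \<Longrightarrow> g i \<in> borel_measurable borel" "\<And>i z. i < n \<Longrightarrow> g i z \<ge> 0"
  shows "(\<integral>\<^sup>+z. ennreal (\<Prod>i<n. g i (z i)) \<partial>lborel_n n) = (\<Prod>i<n. \<integral>\<^sup>+x. ennreal (g i x) \<partial>lborel)"
proof -
  interpret product_sigma_finite "\<lambda>_. lborel" ..
  have "(\<integral>\<^sup>+z. ennreal (\<Prod>i<n. g i (z i)) \<partial>lborel_n n) = (\<integral>\<^sup>+z. (\<Prod>i<n. ennreal (g i (z i))) \<partial>lborel_n n)"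
    using assms(2) by (auto intro!: nn_integral_cong prod_ennreal[symmetric])
  also have "\<dots> = (\<Prod>i<n. \<integral>\<^sup>+x. ennreal (g i x) \<partial>lborel)"
    unfolding lborel_n_def using assms(1) by (intro product_nn_integral_prod) auto
  finally show ?thesis .
qed

lemma awgn_dens_pos: "s > 0 \<Longrightarrow> awgn_dens s n e v z > 0"
  unfolding awgn_dens_def by (auto intro!: prod_pos normal_density_pos)

lemma borel_measurable_awgn_dens [measurable]: "awgn_dens s n e v \<in> borel_measurable (lborel_n n)"
  unfolding awgn_dens_def lborel_n_def by measurable

lemma nn_integral_awgn_dens: "s > 0 \<Longrightarrow> (\<integral>\<^sup>+z. ennreal (awgn_dens s n e v z) \<partial>lborel_n n) = 1"
  unfolding awgn_dens_def by (subst nn_integral_lborel_n_prod) (auto simp: nn_integral_normal_density)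

lemma nn_integral_awgn_dens_tilted:
  fixes \<sigma> s \<theta> D :: real
  assumes "\<sigma> > 0" "\<sigma> \<le> s" "\<theta> \<ge> 0" and D: "D = (1 + \<theta>) * s - \<theta> * \<sigma>"
  shows "(\<integral>\<^sup>+z. ennreal (awgn_dens \<sigma> n e v z
            * (awgn_dens \<sigma> n e v z / awgn_dens s n (\<lambda>_ _. 0) u z) powr \<theta>) \<partial>lborel_n n)
    = ennreal (exp (real n * (\<theta> * ln (s / \<sigma>) + ln (s / D)) / 2
                    + \<theta> * (1 + \<theta>) / (2 * D) * (\<Sum>i<n. (e v i)\<^sup>2)))"
proof -
  define g where "g i t = normal_density (e v i) (sqrt \<sigma>) t
      * (normal_density (e v i) (sqrt \<sigma>) t / normal_density 0 (sqrt s) t) powr \<theta>" for i t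
  have prod_form: "awgn_dens \<sigma> n e v z * (awgn_dens \<sigma> n e v z / awgn_dens s n (\<lambda>_ _. 0) u z) powr \<theta>
      = (\<Prod>i<n. g i (z i))" for z
    unfolding awgn_dens_def g_def by (simp add: prod_dividef[symmetric] prod_powr_distrib prod.distrib)
  have "(\<integral>\<^sup>+z. ennreal (awgn_dens \<sigma> n e v z
            * (awgn_dens \<sigma> n e v z / awgn_dens s n (\<lambda>_ _. 0) u z) powr \<theta>) \<partial>lborel_n n)
      = (\<Prod>i<n. \<integral>\<^sup>+t. ennreal (g i t) \<partial>lborel)"
    unfolding prod_form by (rule nn_integral_lborel_n_prod) (simp_all add: g_def)
  also have "\<dots> = (\<Prod>i<n. ennreal (exp ((\<theta> * ln (s / \<sigma>) + ln (s / D)) / 2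
                                       + \<theta> * (1 + \<theta>) * (e v i)\<^sup>2 / (2 * D))))"
    unfolding g_def by (intro prod.cong refl nn_integral_normal_density_tilted[OF assms])
  also have "\<dots> = ennreal (exp (real n * (\<theta> * ln (s / \<sigma>) + ln (s / D)) / 2
                                 + \<theta> * (1 + \<theta>) / (2 * D) * (\<Sum>i<n. (e v i)\<^sup>2)))"
    by (simp add: prod_ennreal sum.distrib sum_distrib_left sum_divide_distrib flip: exp_sum)
  finally show ?thesis .
qed

lemma ln_tilt_exponent_le:
  fixes \<sigma> P s \<theta> D :: real
  assumes "\<sigma> > 0" "0 \<le> P" "\<sigma> + P \<le> s" "0 \<le> \<theta>" and D: "D = (1 + \<theta>) * s - \<theta> * \<sigma>"
  shows "ln (s / D) + \<theta> * (1 + \<theta>) * P / D \<le> \<theta>\<^sup>2"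
proof -
  have "0 \<le> \<theta> * (s - \<sigma> - P)" "s \<le> D"
    using assms mult_left_mono[of "\<sigma> + P" s \<theta>] mult_left_mono[of \<sigma> s \<theta>] by (auto simp: D algebra_simps)
  moreover have "s > 0" "D > 0" "P \<le> D"
    using assms \<open>s \<le> D\<close> by auto
  ultimately have "ln (s / D) + \<theta> * (1 + \<theta>) * P / D \<le> s / D - 1 + \<theta> * (1 + \<theta>) * P / D"
    using ln_le_minus_one[of "s / D"] by simp
  also have "\<dots> = (s - D + \<theta> * (1 + \<theta>) * P) / D"
    using \<open>D > 0\<close> by (simp add: field_simps)
  also have "\<dots> = (\<theta>\<^sup>2 * P - \<theta> * (s - \<sigma> - P)) / D"
    by (simp add: D algebra_simps power2_eq_square)
  also have "\<dots> \<le> \<theta>\<^sup>2 * P / D"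
    using \<open>D > 0\<close> \<open>0 \<le> \<theta> * (s - \<sigma> - P)\<close> by (simp add: divide_right_mono)
  also have "\<dots> \<le> \<theta>\<^sup>2"
    using \<open>D > 0\<close> \<open>P \<le> D\<close> by (simp add: mult_right_mono field_simps)
  finally show ?thesis .
qed

lemma awgn_tilted_tail_le:
  fixes e :: "'v \<Rightarrow> nat \<Rightarrow> real"
  assumes "\<sigma> > 0" "0 \<le> P" "0 \<le> \<delta>" and power: "(\<Sum>i<n. (e v i)\<^sup>2) \<le> real n * P"
    and s: "s = \<sigma> * (1 + \<delta>) + P"
  shows "ennreal (exp (real n * (ln (s / \<sigma>) + \<delta>) / 2) powr - (\<delta> / 2))
      * (\<integral>\<^sup>+z. ennreal (awgn_dens \<sigma> n e v z
            * (awgn_dens \<sigma> n e v z / awgn_dens s n (\<lambda>_ _. 0) u z) powr (\<delta> / 2)) \<partial>lborel_n n)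
    \<le> ennreal (exp (- real n * \<delta>\<^sup>2 / 8))"
proof -
  define \<theta> where "\<theta> = \<delta> / 2"
  define D where "D = (1 + \<theta>) * s - \<theta> * \<sigma>"
  define R where "R = \<theta> * (1 + \<theta>) * P / D"
  have "\<sigma> + P \<le> s" "\<sigma> \<le> s" "\<theta> \<ge> 0"
    using assms by (auto simp: s \<theta>_def algebra_simps)
  then have "D > 0"
    using \<open>\<sigma> > 0\<close> mult_left_mono[of \<sigma> s \<theta>] by (auto simp: D_def algebra_simps)
  have "- \<theta> * (real n * (ln (s / \<sigma>) + \<delta>) / 2)
      + (real n * (\<theta> * ln (s / \<sigma>) + ln (s / D)) / 2 + \<theta> * (1 + \<theta>) / (2 * D) * (\<Sum>i<n. (e v i)\<^sup>2))
      = - real n * \<theta> * \<delta> / 2 + real n * ln (s / D) / 2 + \<theta> * (1 + \<theta>) / (2 * D) * (\<Sum>i<n. (e v i)\<^sup>2)"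
    by (simp add: field_simps)
  also have "\<dots> \<le> - real n * \<theta> * \<delta> / 2 + real n * ln (s / D) / 2 + \<theta> * (1 + \<theta>) / (2 * D) * (real n * P)"
    using power \<open>\<theta> \<ge> 0\<close> \<open>D > 0\<close> by (intro add_left_mono mult_left_mono) auto
  also have "\<dots> = - real n * \<theta> * \<delta> / 2 + real n * (ln (s / D) + R) / 2"
    using \<open>D > 0\<close> by (simp add: R_def field_simps)
  also have "\<dots> \<le> - real n * \<theta> * \<delta> / 2 + real n * \<theta>\<^sup>2 / 2"
    using ln_tilt_exponent_le[OF \<open>\<sigma> > 0\<close> \<open>0 \<le> P\<close> \<open>\<sigma> + P \<le> s\<close> \<open>\<theta> \<ge> 0\<close> D_def]
    by (auto simp: R_def intro: mult_left_mono)
  also have "\<dots> = - real n * \<delta>\<^sup>2 / 8"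
    by (simp add: \<theta>_def field_simps power2_eq_square)
  finally show ?thesis
    unfolding \<theta>_def[symmetric]
    by (simp add: nn_integral_awgn_dens_tilted[OF \<open>\<sigma> > 0\<close> \<open>\<sigma> \<le> s\<close> \<open>\<theta> \<ge> 0\<close> D_def]
        exp_powr_real ennreal_leI flip: ennreal_mult exp_add) (simp add: mult_ac)
qed

lemma smooth_Imax_awgn_le:
  fixes e :: "'v \<Rightarrow> nat \<Rightarrow> real"
  assumes "\<sigma> > 0" "0 \<le> P" "0 \<le> \<delta>" "finite V" "V \<noteq> {}"
    and power: "\<And>v. v \<in> V \<Longrightarrow> (\<Sum>i<n. (e v i)\<^sup>2) \<le> real n * P"
  shows "smooth_Imax (lborel_n n) V (awgn_dens \<sigma> n e) (exp (- real n * \<delta>\<^sup>2 / 8))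
    \<le> ereal (real n / 2 * log 2 (1 + \<delta> + P / \<sigma>) + real n * \<delta> * log 2 (exp 1) / 2)"
proof -
  define s where "s = \<sigma> * (1 + \<delta>) + P"
  define c where "c = exp (real n * (ln (s / \<sigma>) + \<delta>) / 2)"
  define q where "q = awgn_dens s n (\<lambda>_ _. 0) ()"
  have "s > 0"
    using assms by (simp add: s_def add_pos_nonneg)
  have "smooth_Imax (lborel_n n) V (awgn_dens \<sigma> n e) (exp (- real n * \<delta>\<^sup>2 / 8)) \<le> ereal (log 2 c)"
  proof (rule smooth_Imax_le_log_threshold[where q = q])
    show "(\<integral>\<^sup>+z. ennreal (q z) \<partial>lborel_n n) \<le> 1"
      using \<open>s > 0\<close> by (simp add: q_def nn_integral_awgn_dens)
    fix v assume "v \<in> V"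
    then show "ennreal (1 - exp (- real n * \<delta>\<^sup>2 / 8)) \<le> (\<integral>\<^sup>+z. indicator {z \<in> space (lborel_n n).
        awgn_dens \<sigma> n e v z \<le> c * q z} z * ennreal (awgn_dens \<sigma> n e v z) \<partial>lborel_n n)"
      using assms \<open>s > 0\<close> awgn_tilted_tail_le[where e = e and v = v and u = "()", OF assms(1-3) power[OF \<open>v \<in> V\<close>] s_def]
      by (intro nn_integral_below_threshold_ge[where \<theta> = "\<delta> / 2"])
        (auto simp: q_def c_def nn_integral_awgn_dens less_imp_le[OF awgn_dens_pos] awgn_dens_pos)
  qed (use assms \<open>s > 0\<close> in \<open>auto simp: c_def q_def less_imp_le[OF awgn_dens_pos]\<close>)
  also have "log 2 c = real n / 2 * log 2 (1 + \<delta> + P / \<sigma>) + real n * \<delta> * log 2 (exp 1) / 2"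
    using \<open>\<sigma> > 0\<close> by (simp add: c_def s_def log_def field_simps)
  finally show ?thesis .
qed

theorem lemma6:
  fixes \<sigma>W2 P \<delta> :: real
    and l :: "nat \<Rightarrow> nat"
    and e :: "nat \<Rightarrow> bool list \<Rightarrow> nat \<Rightarrow> real"
  assumes "\<sigma>W2 > 0" and "P > 0"
    and power: "\<And>n v. length v = l n \<Longrightarrow> (1 / real n) * (\<Sum>i<n. (e n v i)\<^sup>2) \<le> P"
    and "0 < \<delta>" and "\<delta> < 1 / 2"
  shows "\<exists>g. g \<in> o(\<lambda>n. real n) \<and>
           (\<forall>\<^sub>F n in at_top.
              smooth_Imax (lborel_n n) {v. length v = l n} (awgn_dens \<sigma>W2 n (e n))
                 (exp (- real n * \<delta>\<^sup>2 / 8))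
              \<le> ereal (real n / 2 * log 2 (1 + \<delta> + P / \<sigma>W2)
                       + real n * \<delta> * log 2 (exp 1) / 2 + g n))"
proof (intro exI[of _ "\<lambda>_. 0"] conjI always_eventually allI)
  fix n
  have "finite {v :: bool list. length v = l n}"
    using finite_lists_length_eq[of "UNIV :: bool set" "l n"] by simp
  moreover have "replicate (l n) False \<in> {v. length v = l n}"
    by simp
  moreover have "(\<Sum>i<n. (e n v i)\<^sup>2) \<le> real n * P" if "v \<in> {v. length v = l n}" for v
  proof (cases "n = 0")
    case False
    with power[of v n] that show ?thesis
      by (simp add: divide_le_eq mult.commute)
  qed simp
  ultimately have "smooth_Imax (lborel_n n) {v. length v = l n} (awgn_dens \<sigma>W2 n (e n))
      (exp (- real n * \<delta>\<^sup>2 / 8))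
    \<le> ereal (real n / 2 * log 2 (1 + \<delta> + P / \<sigma>W2) + real n * \<delta> * log 2 (exp 1) / 2)"
    using assms(1,2,4) by (intro smooth_Imax_awgn_le) fastforce+
  then show "smooth_Imax (lborel_n n) {v. length v = l n} (awgn_dens \<sigma>W2 n (e n))
      (exp (- real n * \<delta>\<^sup>2 / 8))
    \<le> ereal (real n / 2 * log 2 (1 + \<delta> + P / \<sigma>W2) + real n * \<delta> * log 2 (exp 1) / 2 + 0)"
    by simp
qed simp

end
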